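(* Let $A=(S,\delta,s_0,F)$ be a $\mathbf{JSL}$-dfa over $\Sigma$. Then: (1) for every $s\in S$, the language accepted by the state $s$ in $A^{\mathsf{op}}$ is $\{w\in\Sigma^*: \delta_{w^r}(s_0)\not\le_S s\}$; (2) if $A$ accepts $L$, then $A^{\mathsf{op}}$ accepts $L^r=\{w^r: w\in L\}$; (3) $[\mathrm{reach}(A)]^{\mathsf{op}}\cong\mathrm{simple}(A^{\mathsf{op}})$ as $\mathbf{JSL}$-dfas; in particular $A$ is reachable if and only if $A^{\mathsf{op}}$ is simple.
   Context: Finite semilattices have joins of all finite subsets; their morphisms preserve finite joins. A $\mathbf{JSL}$-dfa $A=(S,\delta,s_0,F)$: a finite semilattice $S$, semilattice morphisms $\delta_a\colon S\to S$ ($a\in\Sigma$), initial state $s_0$, final states $F=\{s:s\not\le s_f\}$ for some $s_f\in S$. Write $\delta_w=\delta_{a_n}\circ\cdots\circ\delta_{a_1}$ for $w=a_1\cdots a_n$, and $w^r=a_n\cdots a_1$. The language accepted by a state $s$ is $L(A,s)=\{w:\delta_w(s)\in F\}$, and $A$ accepts $L(A,s_0)$. Morphisms of $\mathbf{JSL}$-dfas are semilattice morphisms preserving transitions, initial state and final states (both ways). The dual $A^{\mathsf{op}}$ has states $S^{\mathsf{op}}$ (reversed order), transitions $\delta^*_a(s)=$ the $\le_S$-largest $t$ with $\delta_a(t)\le_S s$, initial state the $\le_S$-largest non-final state of $A$, and final states $\{s: s_0\not\le_S s\}$. $A$ is reachable if every state is a finite join of states $\delta_w(s_0)$; $\mathrm{reach}(A)$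 is the sub-$\mathbf{JSL}$-dfa on the set of all such finite joins. $A$ is simple if distinct states accept distinct languages; $\mathrm{simple}(A)$ is the $\mathbf{JSL}$-dfa whose states are the languages $L(A,s)$, $s\in S$, ordered by inclusion (join $=$ union), with transitions $K\mapsto a^{-1}K=\{w:aw\in K\}$, initial state $L(A,s_0)$, and final states the $K$ with $\epsilon\in K$. *)

theory Defs
  imports Main
begin

definition is_lub :: "('s \<Rightarrow> 's \<Rightarrow> bool) \<Rightarrow> 's set \<Rightarrow> 's set \<Rightarrow> 's \<Rightarrow> bool" where
  "is_lub le S X j \<longleftrightarrow> j \<in> S \<and> (\<forall>x\<in>X. le x j) \<and> (\<forall>u\<in>S. (\<forall>x\<in>X. le x u) \<longrightarrow> le j u)"

definition Join :: "('s \<Rightarrow> 's \<Rightarrow> bool) \<Rightarrow> 's set \<Rightarrow> 's set \<Rightarrow> 's" where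
  "Join le S X = (THE j. is_lub le S X j)"

definition finite_jsl :: "'s set \<Rightarrow> ('s \<Rightarrow> 's \<Rightarrow> bool) \<Rightarrow> bool" where
  "finite_jsl S le \<longleftrightarrow> finite S
     \<and> (\<forall>x\<in>S. le x x)
     \<and> (\<forall>x\<in>S. \<forall>y\<in>S. le x y \<and> le y x \<longrightarrow> x = y)
     \<and> (\<forall>x\<in>S. \<forall>y\<in>S. \<forall>z\<in>S. le x y \<and> le y z \<longrightarrow> le x z)
     \<and> (\<forall>X. X \<subseteq> S \<and> finite X \<longrightarrow> (\<exists>j. is_lub le S X j))"

definition jsl_hom :: "'s set \<Rightarrow> ('s \<Rightarrow> 's \<Rightarrow> bool) \<Rightarrow> 't set \<Rightarrow> ('t \<Rightarrow> 't \<Rightarrow> bool) \<Rightarrow> ('s \<Rightarrow> 't) \<Rightarrow> bool" where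
  "jsl_hom S le T le' f \<longleftrightarrow> (\<forall>x\<in>S. f x \<in> T)
     \<and> (\<forall>X. X \<subseteq> S \<and> finite X \<longrightarrow> f (Join le S X) = Join le' T (f ` X))"

definition greatest :: "('s \<Rightarrow> 's \<Rightarrow> bool) \<Rightarrow> 's set \<Rightarrow> ('s \<Rightarrow> bool) \<Rightarrow> 's" where
  "greatest le S P = (THE t. t \<in> S \<and> P t \<and> (\<forall>u\<in>S. P u \<longrightarrow> le u t))"

record ('s, 'a) jsl_dfa =
  states :: "'s set"
  leq    :: "'s \<Rightarrow> 's \<Rightarrow> bool"
  delta  :: "'a \<Rightarrow> 's \<Rightarrow> 's"
  init   :: 's
  final  :: "'s set"

definition is_jsl_dfa :: "('s, 'a) jsl_dfa \<Rightarrow> bool" where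
  "is_jsl_dfa A \<longleftrightarrow> finite_jsl (states A) (leq A)
     \<and> (\<forall>a. jsl_hom (states A) (leq A) (states A) (leq A) (delta A a))
     \<and> init A \<in> states A
     \<and> (\<exists>sf\<in>states A. final A = {s \<in> states A. \<not> leq A s sf})"

definition deltaw :: "('s, 'a) jsl_dfa \<Rightarrow> 'a list \<Rightarrow> 's \<Rightarrow> 's" where
  "deltaw A w s = fold (delta A) w s"

definition lang :: "('s, 'a) jsl_dfa \<Rightarrow> 's \<Rightarrow> 'a list set" where
  "lang A s = {w. deltaw A w s \<in> final A}"

definition dual :: "('s, 'a) jsl_dfa \<Rightarrow> ('s, 'a) jsl_dfa" where
  "dual A = \<lparr> states = states A,
              leq = (\<lambda>x y. leq A y x),
              delta = (\<lambda>a s. greatest (leq A) (states A) (\<lambda>t. leq A (delta A a t) s)),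
              init = greatest (leq A) (states A) (\<lambda>t. t \<notin> final A),
              final = {s \<in> states A. \<not> leq A (init A) s} \<rparr>"

definition reach_set :: "('s, 'a) jsl_dfa \<Rightarrow> 's set" where
  "reach_set A = {Join (leq A) (states A) X | X.
       finite X \<and> X \<subseteq> range (\<lambda>w. deltaw A w (init A))}"

definition reach :: "('s, 'a) jsl_dfa \<Rightarrow> ('s, 'a) jsl_dfa" where
  "reach A = A\<lparr> states := reach_set A, final := final A \<inter> reach_set A \<rparr>"

definition reachable :: "('s, 'a) jsl_dfa \<Rightarrow> bool" where
  "reachable A \<longleftrightarrow> states A \<subseteq> reach_set A"

definition simple :: "('s, 'a) jsl_dfa \<Rightarrow> ('a list set, 'a) jsl_dfa" where
  "simple A = \<lparr> states = lang A ` states A,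
                leq = (\<subseteq>),
                delta = (\<lambda>a K. {w. a # w \<in> K}),
                init = lang A (init A),
                final = {K \<in> lang A ` states A. [] \<in> K} \<rparr>"

definition is_simple :: "('s, 'a) jsl_dfa \<Rightarrow> bool" where
  "is_simple A \<longleftrightarrow> (\<forall>s\<in>states A. \<forall>t\<in>states A. lang A s = lang A t \<longrightarrow> s = t)"

definition dfa_hom :: "('s, 'a) jsl_dfa \<Rightarrow> ('t, 'a) jsl_dfa \<Rightarrow> ('s \<Rightarrow> 't) \<Rightarrow> bool" where
  "dfa_hom A B f \<longleftrightarrow> jsl_hom (states A) (leq A) (states B) (leq B) f
     \<and> (\<forall>a. \<forall>s\<in>states A. f (delta A a s) = delta B a (f s))
     \<and> f (init A) = init B
     \<and> (\<forall>s\<in>states A. s \<in> final A \<longleftrightarrow> f s \<in> final B)"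

definition dfa_iso :: "('s, 'a) jsl_dfa \<Rightarrow> ('t, 'a) jsl_dfa \<Rightarrow> bool" where
  "dfa_iso A B \<longleftrightarrow> (\<exists>f g. dfa_hom A B f \<and> dfa_hom B A g
      \<and> (\<forall>s\<in>states A. g (f s) = s) \<and> (\<forall>t\<in>states B. f (g t) = t))"

end

theory Submission
  imports Defs
begin

text \<open>The transitions of \<open>A\<^sup>o\<^sup>p\<close> are the upper adjoints of those of \<open>A\<close>, so the Galois
  correspondence gives \<open>t \<le> \<delta>\<^sup>*\<^sub>w(s) \<longleftrightarrow> \<delta>\<^bsub>rev w\<^esub>(t) \<le> s\<close>; with \<open>t = s\<^sub>0\<close> this computes the
  languages of the dual, and in particular shows that it accepts the reversed language. A state
  \<open>s\<close> of \<open>A\<^sup>o\<^sup>p\<close> thus accepts the words whose reversal leads to a reachable state not below \<open>s\<close>,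
  so two states accept the same language iff the same reachable states lie below them. For states
  of \<open>reach(A)\<close>, which are joins of reachable states, this forces equality: \<open>[reach(A)]\<^sup>o\<^sup>p\<close> is
  simple, so its language map is an isomorphism onto its simple quotient, and that quotient is
  \<open>simple(A\<^sup>o\<^sup>p)\<close> because every state has the same \<open>A\<^sup>o\<^sup>p\<close>-language as its largest
  reach-state below it.\<close>

lemma Join_eq_lub:
  assumes "\<forall>x\<in>S. \<forall>y\<in>S. le x y \<and> le y x \<longrightarrow> x = y" and "is_lub le S X j"
  shows "Join le S X = j"
  unfolding Join_def
proof (rule the_equality)
  show "is_lub le S X j" by fact
  fix j' assume "is_lub le S X j'"
  with assms show "j' = j" unfolding is_lub_def by blast
qed

locale jsl =
  fixes S :: "'s set" and le :: "'s \<Rightarrow> 's \<Rightarrow> bool"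
  assumes finite_jsl: "finite_jsl S le"
begin

lemma finite_carrier: "finite S"
  and leq_refl: "x \<in> S \<Longrightarrow> le x x"
  and leq_antisym: "x \<in> S \<Longrightarrow> y \<in> S \<Longrightarrow> le x y \<Longrightarrow> le y x \<Longrightarrow> x = y"
  and leq_trans: "x \<in> S \<Longrightarrow> y \<in> S \<Longrightarrow> z \<in> S \<Longrightarrow> le x y \<Longrightarrow> le y z \<Longrightarrow> le x z"
  using finite_jsl unfolding finite_jsl_def by blast+

lemma Join_is_lub: "X \<subseteq> S \<Longrightarrow> is_lub le S X (Join le S X)"
proof -
  assume X: "X \<subseteq> S"
  then obtain j where j: "is_lub le S X j"
    using finite_jsl finite_subset[OF X finite_carrier] unfolding finite_jsl_def by blast
  moreover have "Join le S X = j" using Join_eq_lub[OF _ j] leq_antisym by blast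
  ultimately show ?thesis by simp
qed

lemma Join_in: "X \<subseteq> S \<Longrightarrow> Join le S X \<in> S"
  and Join_upper: "X \<subseteq> S \<Longrightarrow> x \<in> X \<Longrightarrow> le x (Join le S X)"
  and Join_least: "X \<subseteq> S \<Longrightarrow> u \<in> S \<Longrightarrow> (\<And>x. x \<in> X \<Longrightarrow> le x u) \<Longrightarrow> le (Join le S X) u"
  using Join_is_lub unfolding is_lub_def by blast+

lemma Join_le_iff: "X \<subseteq> S \<Longrightarrow> u \<in> S \<Longrightarrow> le (Join le S X) u \<longleftrightarrow> (\<forall>x\<in>X. le x u)"
  by (meson Join_in Join_least Join_upper leq_trans subsetD)

lemma Join_singleton: "x \<in> S \<Longrightarrow> Join le S {x} = x"
  by (rule Join_eq_lub) (auto simp: is_lub_def leq_refl intro: leq_antisym)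

lemma eq_if_same_lower_bounds:
  assumes "a \<in> S" "b \<in> S" "\<And>t. t \<in> S \<Longrightarrow> le t a \<longleftrightarrow> le t b"
  shows "a = b"
  using assms leq_refl leq_antisym by blast

lemma hom_in: "jsl_hom S le S le h \<Longrightarrow> x \<in> S \<Longrightarrow> h x \<in> S"
  unfolding jsl_hom_def by blast

lemma hom_mono:
  assumes h: "jsl_hom S le S le h" and "x \<in> S" "y \<in> S" "le x y"
  shows "le (h x) (h y)"
proof -
  have "Join le S {x, y} = y"
    using assms(2-4) by (intro Join_eq_lub) (auto simp: is_lub_def leq_refl intro: leq_antisym)
  moreover have "h (Join le S {x, y}) = Join le S {h x, h y}"
    using h assms(2,3) unfolding jsl_hom_def by simp
  ultimately show ?thesis
    using Join_upper[of "{h x, h y}"] hom_in[OF h] assms(2,3) by simp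
qed

lemma greatest_eqI:
  assumes "t \<in> S" "P t" "\<And>u. u \<in> S \<Longrightarrow> P u \<Longrightarrow> le u t"
  shows "greatest le S P = t"
  unfolding greatest_def
  by (rule the_equality) (use assms leq_antisym in blast)+

text \<open>Finite meets exist, as joins of lower bounds, so the converse order is again a finite
  join-semilattice.\<close>

lemma is_lub_converse:
  assumes "X \<subseteq> S"
  shows "is_lub (\<lambda>x y. le y x) S X (Join le S {t \<in> S. \<forall>x\<in>X. le t x})"
  unfolding is_lub_def
proof (intro conjI ballI impI)
  let ?L = "{t \<in> S. \<forall>x\<in>X. le t x}"
  have L: "?L \<subseteq> S" by blast
  show "Join le S ?L \<in> S" using Join_in[OF L] .
  show "le (Join le S ?L) x" if "x \<in> X" for x
    using that assms by (intro Join_least[OF L]) auto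
  show "le u (Join le S ?L)" if "u \<in> S" "\<forall>x\<in>X. le u x" for u
    using that by (intro Join_upper[OF L]) auto
qed

lemma finite_jsl_converse: "finite_jsl S (\<lambda>x y. le y x)"
  unfolding finite_jsl_def
proof (intro conjI ballI allI impI)
  show "finite S" by (rule finite_carrier)
  show "\<exists>j. is_lub (\<lambda>x y. le y x) S X j" if "X \<subseteq> S \<and> finite X" for X
    using that is_lub_converse by blast
qed (use leq_refl leq_antisym leq_trans in blast)+

lemma le_Join_converse_iff:
  assumes "X \<subseteq> S" "t \<in> S"
  shows "le t (Join (\<lambda>x y. le y x) S X) \<longleftrightarrow> (\<forall>x\<in>X. le t x)"
proof -
  let ?m = "Join le S {t \<in> S. \<forall>x\<in>X. le t x}"
  have lub: "is_lub (\<lambda>x y. le y x) S X ?m" using is_lub_converse[OF assms(1)] .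
  have "\<forall>x\<in>S. \<forall>y\<in>S. le y x \<and> le x y \<longrightarrow> x = y" using leq_antisym by blast
  then have eq: "Join (\<lambda>x y. le y x) S X = ?m" using Join_eq_lub[OF _ lub] by blast
  have m: "?m \<in> S" "\<forall>x\<in>X. le ?m x" "\<forall>u\<in>S. (\<forall>x\<in>X. le u x) \<longrightarrow> le u ?m"
    using lub unfolding is_lub_def by auto
  show ?thesis
    unfolding eq using leq_trans[OF assms(2) m(1)] m(2,3) assms by blast
qed

lemma upper_adjoint:
  assumes h: "jsl_hom S le S le h" and s: "s \<in> S"
  shows "greatest le S (\<lambda>t. le (h t) s) \<in> S"
    and "t \<in> S \<Longrightarrow> le t (greatest le S (\<lambda>t. le (h t) s)) \<longleftrightarrow> le (h t) s"
proof -
  define Y where "Y = {t \<in> S. le (h t) s}"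
  have Y: "Y \<subseteq> S" "finite Y" using finite_subset[OF _ finite_carrier] by (auto simp: Y_def)
  have "h (Join le S Y) = Join le S (h ` Y)" using h Y unfolding jsl_hom_def by blast
  also have "le \<dots> s" using Y s hom_in[OF h] by (intro Join_least) (auto simp: Y_def)
  finally have top: "le (h (Join le S Y)) s" .
  have eq: "greatest le S (\<lambda>t. le (h t) s) = Join le S Y"
    using Y top by (intro greatest_eqI Join_in) (auto simp: Y_def intro: Join_upper)
  then show "greatest le S (\<lambda>t. le (h t) s) \<in> S" using Join_in[OF Y(1)] by simp
  assume t: "t \<in> S"
  have "le t (Join le S Y) \<Longrightarrow> le (h t) s"
    using hom_mono[OF h t Join_in[OF Y(1)]] top hom_in[OF h] t Join_in[OF Y(1)] s leq_trans
    by blast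
  with t show "le t (greatest le S (\<lambda>t. le (h t) s)) \<longleftrightarrow> le (h t) s"
    unfolding eq using Join_upper[OF Y(1)] by (auto simp: Y_def)
qed

lemma upper_adjoint_hom_converse:
  assumes h: "jsl_hom S le S le h"
  shows "jsl_hom S (\<lambda>x y. le y x) S (\<lambda>x y. le y x) (\<lambda>s. greatest le S (\<lambda>t. le (h t) s))"
  unfolding jsl_hom_def
proof (intro conjI ballI allI impI)
  let ?g = "\<lambda>s. greatest le S (\<lambda>t. le (h t) s)"
  let ?M = "Join (\<lambda>x y. le y x) S"
  show "?g s \<in> S" if "s \<in> S" for s using upper_adjoint(1)[OF h that] .
  fix X assume X: "X \<subseteq> S \<and> finite X"
  have gX: "?g ` X \<subseteq> S" using X upper_adjoint(1)[OF h] by blast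
  have MX: "?M X \<in> S"
    using jsl.Join_in[OF jsl.intro[OF finite_jsl_converse]] X by blast
  show "?g (?M X) = ?M (?g ` X)"
  proof (rule eq_if_same_lower_bounds)
    show "?g (?M X) \<in> S" using upper_adjoint(1)[OF h MX] .
    show "?M (?g ` X) \<in> S"
      using jsl.Join_in[OF jsl.intro[OF finite_jsl_converse]] gX by blast
    fix t assume t: "t \<in> S"
    have "le t (?g (?M X)) \<longleftrightarrow> (\<forall>x\<in>X. le (h t) x)"
      using upper_adjoint(2)[OF h MX t] le_Join_converse_iff X hom_in[OF h t] by blast
    also have "\<dots> \<longleftrightarrow> (\<forall>x\<in>X. le t (?g x))"
      using upper_adjoint(2)[OF h _ t] X by blast
    also have "\<dots> \<longleftrightarrow> le t (?M (?g ` X))"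
      using le_Join_converse_iff[OF gX t] by blast
    finally show "le t (?g (?M X)) \<longleftrightarrow> le t (?M (?g ` X))" .
  qed
qed

definition join_closed :: "'s set \<Rightarrow> bool" where
  "join_closed T \<longleftrightarrow> T \<subseteq> S \<and> (\<forall>X. X \<subseteq> T \<longrightarrow> Join le S X \<in> T)"

lemma is_lub_join_closed:
  assumes T: "join_closed T" and X: "X \<subseteq> T"
  shows "is_lub le T X (Join le S X)"
proof -
  have TS: "T \<subseteq> S" and closed: "Join le S X \<in> T" using T X unfolding join_closed_def by auto
  have XS: "X \<subseteq> S" using X TS by blast
  show ?thesis
    unfolding is_lub_def
  proof (intro conjI ballI impI)
    show "Join le S X \<in> T" by (rule closed)
    show "le x (Join le S X)" if "x \<in> X" for x using Join_upper[OF XS that] .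
    show "le (Join le S X) u" if "u \<in> T" "\<forall>x\<in>X. le x u" for u
      using that TS by (intro Join_least[OF XS]) auto
  qed
qed

lemma Join_join_closed:
  assumes T: "join_closed T" and X: "X \<subseteq> T"
  shows "Join le T X = Join le S X"
proof (rule Join_eq_lub[OF _ is_lub_join_closed[OF T X]])
  show "\<forall>x\<in>T. \<forall>y\<in>T. le x y \<and> le y x \<longrightarrow> x = y"
    using T leq_antisym unfolding join_closed_def by blast
qed

lemma finite_jsl_join_closed:
  assumes T: "join_closed T"
  shows "finite_jsl T le"
proof -
  have TS: "T \<subseteq> S" using T unfolding join_closed_def by blast
  show ?thesis
    unfolding finite_jsl_def
  proof (intro conjI ballI allI impI)
    show "finite T" using finite_subset[OF TS finite_carrier] .
    show "\<exists>j. is_lub le T X j" if "X \<subseteq> T \<and> finite X" for X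
      using that is_lub_join_closed[OF T] by blast
  qed (use TS leq_refl leq_antisym leq_trans in blast)+
qed

end

lemma deltaw_Nil [simp]: "deltaw A [] s = s"
  and deltaw_Cons [simp]: "deltaw A (a # w) s = deltaw A w (delta A a s)"
  and deltaw_snoc: "deltaw A (w @ [a]) s = delta A a (deltaw A w s)"
  by (simp_all add: deltaw_def)

lemma lang_delta: "lang A (delta A a s) = {w. a # w \<in> lang A s}"
  by (simp add: lang_def)

lemma Nil_in_lang_iff: "[] \<in> lang A s \<longleftrightarrow> s \<in> final A"
  by (simp add: lang_def)

lemma is_simple_iff_inj_on: "is_simple A \<longleftrightarrow> inj_on (lang A) (states A)"
  by (auto simp: is_simple_def inj_on_def)

lemma states_dual [simp]: "states (dual A) = states A"
  and leq_dual [simp]: "leq (dual A) = (\<lambda>x y. leq A y x)"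
  and delta_dual: "delta (dual A) a = (\<lambda>s. greatest (leq A) (states A) (\<lambda>t. leq A (delta A a t) s))"
  and final_dual [simp]: "final (dual A) = {s \<in> states A. \<not> leq A (init A) s}"
  by (simp_all add: dual_def)

lemma states_reach [simp]: "states (reach A) = reach_set A"
  and leq_reach [simp]: "leq (reach A) = leq A"
  and delta_reach [simp]: "delta (reach A) = delta A"
  and init_reach [simp]: "init (reach A) = init A"
  and final_reach [simp]: "final (reach A) = final A \<inter> reach_set A"
  and deltaw_reach [simp]: "deltaw (reach A) = deltaw A"
  by (simp_all add: reach_def deltaw_def[abs_def])

locale jsl_automaton =
  fixes A :: "('s, 'a) jsl_dfa"
  assumes is_jsl_dfa: "is_jsl_dfa A"
begin

sublocale jsl "states A" "leq A"
  using is_jsl_dfa by unfold_locales (simp add: is_jsl_dfa_def)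

lemma delta_hom: "jsl_hom (states A) (leq A) (states A) (leq A) (delta A a)"
  and init_in: "init A \<in> states A"
  using is_jsl_dfa unfolding is_jsl_dfa_def by blast+

lemma obtain_final_threshold:
  obtains sf where "sf \<in> states A" "final A = {s \<in> states A. \<not> leq A s sf}"
  using is_jsl_dfa unfolding is_jsl_dfa_def by blast

lemma delta_in: "s \<in> states A \<Longrightarrow> delta A a s \<in> states A"
  using hom_in[OF delta_hom] .

lemma deltaw_in: "s \<in> states A \<Longrightarrow> deltaw A w s \<in> states A"
  by (induction w arbitrary: s) (simp_all add: delta_in)

lemma deltaw_Join:
  "X \<subseteq> states A \<Longrightarrow> deltaw A w (Join (leq A) (states A) X) = Join (leq A) (states A) (deltaw A w ` X)"
proof (induction w arbitrary: X)
  case (Cons a w)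
  have "delta A a (Join (leq A) (states A) X) = Join (leq A) (states A) (delta A a ` X)"
    using delta_hom Cons.prems finite_subset[OF _ finite_carrier] unfolding jsl_hom_def by blast
  with Cons.IH[of "delta A a ` X"] Cons.prems delta_in show ?case by (auto simp: image_image)
qed simp

lemma Join_in_final_iff:
  assumes X: "X \<subseteq> states A"
  shows "Join (leq A) (states A) X \<in> final A \<longleftrightarrow> (\<exists>x\<in>X. x \<in> final A)"
proof -
  obtain sf where sf: "sf \<in> states A" "final A = {s \<in> states A. \<not> leq A s sf}"
    using obtain_final_threshold .
  show ?thesis using Join_le_iff[OF X sf(1)] Join_in[OF X] X by (auto simp: sf(2))
qed

lemma lang_Join:
  assumes X: "X \<subseteq> states A"
  shows "lang A (Join (leq A) (states A) X) = (\<Union>x\<in>X. lang A x)"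
proof -
  have "deltaw A w ` X \<subseteq> states A" for w using X deltaw_in by blast
  then show ?thesis by (auto simp: lang_def deltaw_Join[OF X] Join_in_final_iff)
qed

lemma dfa_hom_lang: "dfa_hom A (simple A) (lang A)"
  unfolding dfa_hom_def
proof (intro conjI allI ballI)
  show "jsl_hom (states A) (leq A) (states (simple A)) (leq (simple A)) (lang A)"
    unfolding jsl_hom_def
  proof (intro conjI allI ballI impI)
    fix X assume X: "X \<subseteq> states A \<and> finite X"
    have "Join (\<subseteq>) (lang A ` states A) (lang A ` X) = (\<Union>x\<in>X. lang A x)"
    proof (rule Join_eq_lub)
      have "(\<Union>x\<in>X. lang A x) \<in> lang A ` states A"
        using lang_Join X Join_in by (metis image_eqI)
      then show "is_lub (\<subseteq>) (lang A ` states A) (lang A ` X) (\<Union>x\<in>X. lang A x)"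
        unfolding is_lub_def by blast
    qed blast
    then show "lang A (Join (leq A) (states A) X) = Join (leq (simple A)) (states (simple A)) (lang A ` X)"
      using lang_Join X by (simp add: simple_def)
  qed (simp add: simple_def)
qed (auto simp: simple_def lang_delta Nil_in_lang_iff)

lemma dfa_iso_if_bij_hom:
  assumes f: "dfa_hom A B f" and bij: "bij_betw f (states A) (states B)"
  shows "dfa_iso A B"
proof -
  define g where "g = inv_into (states A) f"
  have g_in: "g t \<in> states A" and fg: "f (g t) = t" if "t \<in> states B" for t
    using that bij by (auto simp: g_def bij_betw_def inv_into_into f_inv_into_f)
  have gf: "g (f s) = s" if "s \<in> states A" for s
    using that bij by (simp add: g_def bij_betw_def)
  have fhom: "jsl_hom (states A) (leq A) (states B) (leq B) f"
    and fdelta: "\<And>a s. s \<in> states A \<Longrightarrow> f (delta A a s) = delta B a (f s)"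
    and finit: "f (init A) = init B"
    and ffinal: "\<And>s. s \<in> states A \<Longrightarrow> s \<in> final A \<longleftrightarrow> f s \<in> final B"
    using f unfolding dfa_hom_def by blast+
  have "jsl_hom (states B) (leq B) (states A) (leq A) g"
    unfolding jsl_hom_def
  proof (intro conjI allI ballI impI)
    fix X assume X: "X \<subseteq> states B \<and> finite X"
    have gX: "g ` X \<subseteq> states A" "finite (g ` X)" using X g_in by auto
    have "f ` g ` X = X" using X fg by (force simp: image_image)
    moreover have "f (Join (leq A) (states A) (g ` X)) = Join (leq B) (states B) (f ` g ` X)"
      using fhom gX unfolding jsl_hom_def by blast
    ultimately have "Join (leq B) (states B) X = f (Join (leq A) (states A) (g ` X))" by simp
    then show "g (Join (leq B) (states B) X) = Join (leq A) (states A) (g ` X)"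
      using gf[OF Join_in[OF gX(1)]] by simp
  qed (use g_in in blast)
  moreover have "g (delta B a t) = delta A a (g t)" if t: "t \<in> states B" for a t
  proof -
    have "delta B a t = f (delta A a (g t))" using fdelta[OF g_in[OF t]] fg[OF t] by simp
    then show ?thesis using gf delta_in[OF g_in[OF t]] by simp
  qed
  moreover have "g (init B) = init A" using finit gf init_in by metis
  moreover have "t \<in> final B \<longleftrightarrow> g t \<in> final A" if "t \<in> states B" for t
    using ffinal g_in fg that by metis
  ultimately have "dfa_hom B A g" unfolding dfa_hom_def by blast
  with f gf fg show ?thesis unfolding dfa_iso_def by blast
qed

lemma dfa_iso_simple: "is_simple A \<Longrightarrow> dfa_iso A (simple A)"
  by (rule dfa_iso_if_bij_hom[OF dfa_hom_lang])
    (simp add: is_simple_iff_inj_on bij_betw_def simple_def)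

lemma delta_dual_in: "s \<in> states A \<Longrightarrow> delta (dual A) a s \<in> states A"
  and le_delta_dual_iff:
    "s \<in> states A \<Longrightarrow> t \<in> states A \<Longrightarrow> leq A t (delta (dual A) a s) \<longleftrightarrow> leq A (delta A a t) s"
  using upper_adjoint[OF delta_hom] by (simp_all add: delta_dual)

lemma deltaw_dual_in: "s \<in> states A \<Longrightarrow> deltaw (dual A) w s \<in> states A"
  by (induction w arbitrary: s) (simp_all add: delta_dual_in)

lemma le_deltaw_dual_iff:
  "s \<in> states A \<Longrightarrow> t \<in> states A \<Longrightarrow>
    leq A t (deltaw (dual A) w s) \<longleftrightarrow> leq A (deltaw A (rev w) t) s"
  by (induction w arbitrary: s) (simp_all add: delta_dual_in le_delta_dual_iff deltaw_snoc deltaw_in)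

lemma init_dual:
  assumes "sf \<in> states A" "final A = {s \<in> states A. \<not> leq A s sf}"
  shows "init (dual A) = sf"
  using assms by (simp add: dual_def) (intro greatest_eqI; simp add: leq_refl)

lemma lang_dual:
  "s \<in> states A \<Longrightarrow> lang (dual A) s = {w. \<not> leq A (deltaw A (rev w) (init A)) s}"
  using deltaw_dual_in le_deltaw_dual_iff init_in by (auto simp: lang_def)

lemma lang_dual_init: "lang (dual A) (init (dual A)) = rev ` lang A (init A)"
proof -
  obtain sf where sf: "sf \<in> states A" "final A = {s \<in> states A. \<not> leq A s sf}"
    using obtain_final_threshold .
  have "w \<in> rev ` lang A (init A) \<longleftrightarrow> rev w \<in> lang A (init A)" for w
    by (metis image_iff rev_rev_ident)
  then show ?thesis
    using init_dual[OF sf] lang_dual[OF sf(1)] deltaw_in[OF init_in]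
    by (auto simp: lang_def sf(2))
qed

lemma is_jsl_dfa_dual: "is_jsl_dfa (dual A)"
proof -
  obtain sf where sf: "sf \<in> states A" "final A = {s \<in> states A. \<not> leq A s sf}"
    using obtain_final_threshold .
  show ?thesis
    unfolding is_jsl_dfa_def
    using finite_jsl_converse upper_adjoint_hom_converse[OF delta_hom] init_dual[OF sf] sf(1) init_in
    by (auto simp: delta_dual)
qed

definition reached :: "'s set" where
  "reached = range (\<lambda>w. deltaw A w (init A))"

text \<open>The largest element of \<open>reach(A)\<close> below \<open>s\<close>; its fixed points are the states of \<open>reach(A)\<close>.\<close>

definition reach_interior :: "'s \<Rightarrow> 's" where
  "reach_interior s = Join (leq A) (states A) {x \<in> reached. leq A x s}"

lemma reached_subset: "reached \<subseteq> states A"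
  using deltaw_in init_in by (auto simp: reached_def)

lemma init_reached: "init A \<in> reached"
  unfolding reached_def by (metis deltaw_Nil rangeI)

lemma reached_rev: "deltaw A (rev w) (init A) \<in> reached"
  by (simp add: reached_def)

lemma delta_reached: "x \<in> reached \<Longrightarrow> delta A a x \<in> reached"
  by (auto simp: reached_def deltaw_snoc[symmetric])

lemma reach_set_eq: "reach_set A = {Join (leq A) (states A) X | X. X \<subseteq> reached}"
  unfolding reach_set_def reached_def[symmetric]
  using finite_subset[OF _ finite_carrier] reached_subset by blast

lemma reach_set_subset: "reach_set A \<subseteq> states A"
  using reach_set_eq Join_in reached_subset by auto

lemma reach_interior_in: "reach_interior s \<in> reach_set A"
  unfolding reach_set_eq reach_interior_def by blast

lemma reach_interior_in_states: "reach_interior s \<in> states A"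
  using reach_interior_in reach_set_subset by blast

lemma reach_interior_le: "s \<in> states A \<Longrightarrow> leq A (reach_interior s) s"
  unfolding reach_interior_def using reached_subset by (intro Join_least) auto

lemma le_reach_interior_iff_reached:
  assumes x: "x \<in> reached" and s: "s \<in> states A"
  shows "leq A x (reach_interior s) \<longleftrightarrow> leq A x s"
proof -
  have Y: "{x \<in> reached. leq A x s} \<subseteq> states A" using reached_subset by blast
  show ?thesis
    using leq_trans[OF _ Join_in[OF Y] s] reach_interior_le[OF s] Join_upper[OF Y] x reached_subset
    unfolding reach_interior_def by blast
qed

lemma reach_interior_reach_set:
  assumes r: "r \<in> reach_set A"
  shows "reach_interior r = r"
proof -
  obtain X where X: "r = Join (leq A) (states A) X" "X \<subseteq> reached"
    using r unfolding reach_set_eq by blast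
  have XS: "X \<subseteq> states A" using X(2) reached_subset by blast
  have rS: "r \<in> states A" using r reach_set_subset by blast
  have "leq A r (reach_interior r)"
    unfolding X(1) using X(2) XS Join_upper[OF XS] Join_in[OF XS] reach_interior_in reach_set_subset
    by (intro Join_least) (auto simp: le_reach_interior_iff_reached)
  then show ?thesis
    using leq_antisym[OF reach_interior_in_states rS reach_interior_le[OF rS]] by blast
qed

lemma le_reach_interior_iff:
  assumes r: "r \<in> reach_set A" and s: "s \<in> states A"
  shows "leq A r (reach_interior s) \<longleftrightarrow> leq A r s"
proof
  have rS: "r \<in> states A" using r reach_set_subset by blast
  show "leq A r (reach_interior s) \<Longrightarrow> leq A r s"
    using leq_trans[OF rS reach_interior_in_states s] reach_interior_le[OF s] by blast
  assume rs: "leq A r s"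
  have Y: "{x \<in> reached. leq A x r} \<subseteq> states A" using reached_subset by blast
  have "leq A (reach_interior r) (reach_interior s)"
    unfolding reach_interior_def[of r]
    using Y rs rS s reach_interior_in reach_set_subset
    by (intro Join_least) (auto simp: le_reach_interior_iff_reached intro: leq_trans)
  then show "leq A r (reach_interior s)" using reach_interior_reach_set[OF r] by simp
qed

lemma reached_subset_reach_set: "reached \<subseteq> reach_set A"
proof
  fix x assume x: "x \<in> reached"
  then have "x = Join (leq A) (states A) {x}" using Join_singleton reached_subset by auto
  with x show "x \<in> reach_set A" unfolding reach_set_eq by blast
qed

lemma reach_set_join_closed: "join_closed (reach_set A)"
  unfolding join_closed_def
proof (intro conjI allI impI)
  show "reach_set A \<subseteq> states A" by (rule reach_set_subset)
  fix X assume X: "X \<subseteq> reach_set A"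
  let ?J = "Join (leq A) (states A) X"
  have XS: "X \<subseteq> states A" using X reach_set_subset by blast
  have J: "?J \<in> states A" using Join_in[OF XS] .
  have "leq A ?J (reach_interior ?J)"
  proof (rule Join_least[OF XS reach_interior_in_states])
    fix x assume x: "x \<in> X"
    then show "leq A x (reach_interior ?J)"
      using le_reach_interior_iff[OF _ J] X Join_upper[OF XS x] by blast
  qed
  then have "reach_interior ?J = ?J"
    by (rule leq_antisym[OF reach_interior_in_states J reach_interior_le[OF J]])
  then show "?J \<in> reach_set A" using reach_interior_in[of ?J] by simp
qed

lemma delta_reach_set: "r \<in> reach_set A \<Longrightarrow> delta A a r \<in> reach_set A"
proof -
  assume "r \<in> reach_set A"
  then obtain X where X: "r = Join (leq A) (states A) X" "X \<subseteq> reached"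
    unfolding reach_set_eq by blast
  have XS: "X \<subseteq> states A" "finite X"
    using X(2) reached_subset finite_subset[OF _ finite_carrier] by auto
  have "delta A a r = Join (leq A) (states A) (delta A a ` X)"
    using delta_hom XS unfolding X(1) jsl_hom_def by blast
  moreover have "delta A a ` X \<subseteq> reached" using X(2) delta_reached by blast
  ultimately show ?thesis unfolding reach_set_eq by blast
qed

lemma deltaw_reach_set: "r \<in> reach_set A \<Longrightarrow> deltaw A w r \<in> reach_set A"
  by (induction w arbitrary: r) (simp_all add: delta_reach_set)

lemma is_jsl_dfa_reach: "is_jsl_dfa (reach A)"
  unfolding is_jsl_dfa_def
proof (intro conjI allI)
  show "finite_jsl (states (reach A)) (leq (reach A))"
    using finite_jsl_join_closed[OF reach_set_join_closed] by simp
  show "init (reach A) \<in> states (reach A)"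
    using reached_subset_reach_set init_reached by auto
  fix a
  show "jsl_hom (states (reach A)) (leq (reach A)) (states (reach A)) (leq (reach A)) (delta (reach A) a)"
    unfolding jsl_hom_def states_reach leq_reach delta_reach
  proof (intro conjI ballI allI impI)
    fix X assume X: "X \<subseteq> reach_set A \<and> finite X"
    have XS: "X \<subseteq> states A" using X reach_set_subset by blast
    have dX: "delta A a ` X \<subseteq> reach_set A" using X delta_reach_set by blast
    have "delta A a (Join (leq A) (states A) X) = Join (leq A) (states A) (delta A a ` X)"
      using delta_hom XS X unfolding jsl_hom_def by blast
    then show "delta A a (Join (leq A) (reach_set A) X) = Join (leq A) (reach_set A) (delta A a ` X)"
      using Join_join_closed[OF reach_set_join_closed] X dX by simp
  qed (rule delta_reach_set)
next
  obtain sf where sf: "sf \<in> states A" "final A = {s \<in> states A. \<not> leq A s sf}"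
    using obtain_final_threshold .
  have "final A \<inter> reach_set A = {s \<in> reach_set A. \<not> leq A s (reach_interior sf)}"
  proof (rule set_eqI)
    fix s
    show "s \<in> final A \<inter> reach_set A \<longleftrightarrow> s \<in> {s \<in> reach_set A. \<not> leq A s (reach_interior sf)}"
      using sf reach_set_subset le_reach_interior_iff[of s sf] by blast
  qed
  then show "\<exists>sf\<in>states (reach A). final (reach A) = {s \<in> states (reach A). \<not> leq (reach A) s sf}"
    using reach_interior_in[of sf] by auto
qed

lemma lang_reach: "r \<in> reach_set A \<Longrightarrow> lang (reach A) r = lang A r"
  using deltaw_reach_set by (auto simp: lang_def)

lemma lang_dual_reach_interior:
  assumes s: "s \<in> states A"
  shows "lang (dual A) (reach_interior s) = lang (dual A) s"
  using lang_dual[OF s] lang_dual[OF reach_interior_in_states]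
    le_reach_interior_iff_reached[OF reached_rev s] by auto

lemma inj_on_lang_dual_reach_set: "inj_on (lang (dual A)) (reach_set A)"
proof (rule inj_onI)
  fix r r' assume r: "r \<in> reach_set A" and r': "r' \<in> reach_set A"
    and eq: "lang (dual A) r = lang (dual A) r'"
  have rS: "r \<in> states A" and r'S: "r' \<in> states A" using r r' reach_set_subset by auto
  have "leq A x r \<longleftrightarrow> leq A x r'" if x: "x \<in> reached" for x
  proof -
    obtain v where "x = deltaw A v (init A)" using x unfolding reached_def by blast
    then have xv: "x = deltaw A (rev (rev v)) (init A)" by simp
    have "leq A x r \<longleftrightarrow> rev v \<notin> lang (dual A) r" "leq A x r' \<longleftrightarrow> rev v \<notin> lang (dual A) r'"
      by (simp_all add: lang_dual[OF rS] lang_dual[OF r'S] xv)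
    with eq show ?thesis by simp
  qed
  then have "{x \<in> reached. leq A x r} = {x \<in> reached. leq A x r'}" by blast
  then have "reach_interior r = reach_interior r'" unfolding reach_interior_def by simp
  then show "r = r'" using reach_interior_reach_set r r' by simp
qed

lemma lang_dual_reach: "r \<in> reach_set A \<Longrightarrow> lang (dual (reach A)) r = lang (dual A) r"
proof -
  assume r: "r \<in> reach_set A"
  interpret R: jsl_automaton "reach A" by (rule jsl_automaton.intro[OF is_jsl_dfa_reach])
  show ?thesis using R.lang_dual[of r] lang_dual[of r] r reach_set_subset by auto
qed

lemma simple_dual_reach: "simple (dual (reach A)) = simple (dual A)"
proof -
  interpret R: jsl_automaton "reach A" by (rule jsl_automaton.intro[OF is_jsl_dfa_reach])
  have "lang (dual A) ` states A \<subseteq> lang (dual A) ` reach_set A"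
  proof (rule image_subsetI)
    fix s assume "s \<in> states A"
    then have "lang (dual A) s = lang (dual A) (reach_interior s)"
      using lang_dual_reach_interior by simp
    then show "lang (dual A) s \<in> lang (dual A) ` reach_set A" using reach_interior_in by blast
  qed
  then have "lang (dual A) ` reach_set A = lang (dual A) ` states A"
    using reach_set_subset by blast
  moreover have "lang (dual (reach A)) ` reach_set A = lang (dual A) ` reach_set A"
    by (rule image_cong[OF refl lang_dual_reach])
  ultimately have states_eq: "lang (dual (reach A)) ` reach_set A = lang (dual A) ` states A"
    by simp
  have "lang (dual (reach A)) (init (dual (reach A))) = lang (dual A) (init (dual A))"
    using R.lang_dual_init lang_dual_init lang_reach[OF R.init_in[simplified]] by simp
  then show ?thesis using states_eq by (simp add: simple_def)
qed

lemma dfa_iso_dual_reach: "dfa_iso (dual (reach A)) (simple (dual A))"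
proof -
  interpret D: jsl_automaton "dual (reach A)"
    by (rule jsl_automaton.intro[OF jsl_automaton.is_jsl_dfa_dual])
      (rule jsl_automaton.intro[OF is_jsl_dfa_reach])
  have "inj_on (lang (dual (reach A))) (reach_set A)"
    using inj_on_lang_dual_reach_set lang_dual_reach
      inj_on_cong[of "reach_set A" "lang (dual (reach A))" "lang (dual A)"] by blast
  then have "is_simple (dual (reach A))" by (simp add: is_simple_iff_inj_on)
  then show ?thesis using D.dfa_iso_simple simple_dual_reach by simp
qed

lemma reachable_iff_is_simple_dual: "reachable A \<longleftrightarrow> is_simple (dual A)"
proof
  assume "reachable A"
  then show "is_simple (dual A)"
    using inj_on_lang_dual_reach_set
    by (simp add: reachable_def is_simple_iff_inj_on inj_on_subset)
next
  assume "is_simple (dual A)"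
  then have "reach_interior s = s" if "s \<in> states A" for s
    using that lang_dual_reach_interior[OF that] reach_interior_in_states
    unfolding is_simple_def states_dual by blast
  then show "reachable A" unfolding reachable_def using reach_interior_in by (metis subsetI)
qed

end

theorem lemma3p8:
  fixes A :: "('s, 'a) jsl_dfa"
  assumes "is_jsl_dfa A"
  shows "(\<forall>s\<in>states A. lang (dual A) s = {w. \<not> leq A (deltaw A (rev w) (init A)) s})
    \<and> (\<forall>L. lang A (init A) = L \<longrightarrow> lang (dual A) (init (dual A)) = rev ` L)
    \<and> dfa_iso (dual (reach A)) (simple (dual A))
    \<and> (reachable A \<longleftrightarrow> is_simple (dual A))"
proof -
  interpret jsl_automaton A by (rule jsl_automaton.intro[OF assms])
  show ?thesis
    by (simp add: lang_dual lang_dual_init dfa_iso_dual_reach reachable_iff_is_simple_dual)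
qed

end
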